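(* Let $P=R\cup B$ where $R$ is a set of $n$ red points and $B$ a set of $n$ blue points, all distinct and on the line $y=0$, and let $p_1<p_2<\dots<p_{2n}$ be the points of $P$ sorted by $x$-coordinate. Let $2m$ be the smallest positive integer such that $\{p_1,\dots,p_{2m}\}$ contains equally many red and blue points (so $P_1=\{p_1,\dots,p_{2m}\}$ is the first color-balanced prefix). Then $p_1$ and $p_{2m}$ have different colors, and every minimum-weight non-crossing bichromatic perfect matching of $P$ contains the edge $\{p_1,p_{2m}\}$. *)

theory Defs
  imports Complex_Main
begin

text \<open>Points lie on the line y = 0 and are identified with their x-coordinates.
  An edge is a two-element set {r, b} with r red and b blue.\<close>

definition bichromatic_perfect_matching :: "real set \<Rightarrow> real set \<Rightarrow> real set set \<Rightarrow> bool" where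
  "bichromatic_perfect_matching R B M \<longleftrightarrow>
     (\<forall>e\<in>M. \<exists>r\<in>R. \<exists>b\<in>B. e = {r, b}) \<and>
     (\<forall>x\<in>R \<union> B. \<exists>!e. e \<in> M \<and> x \<in> e)"

definition noncrossing :: "real set set \<Rightarrow> bool" where
  "noncrossing M \<longleftrightarrow>
     (\<forall>e\<in>M. \<forall>f\<in>M. \<not> (Min e < Min f \<and> Min f < Max e \<and> Max e < Max f))"

definition matching_weight :: "real set set \<Rightarrow> real" where
  "matching_weight M = (\<Sum>e\<in>M. Max e - Min e)"

definition min_weight_nc_bichromatic_matching :: "real set \<Rightarrow> real set \<Rightarrow> real set set \<Rightarrow> bool" where
  "min_weight_nc_bichromatic_matching R B M \<longleftrightarrow>
     bichromatic_perfect_matching R B M \<and> noncrossing M \<and>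
     (\<forall>M'. bichromatic_perfect_matching R B M' \<and> noncrossing M' \<longrightarrow>
            matching_weight M \<le> matching_weight M')"

end

theory Submission
  imports Defs
begin

text \<open>Let \<open>p\<^sub>1\<close> be the leftmost point and \<open>q\<close> its partner in a minimum-weight non-crossing
  matching. Non-crossing forces every point left of \<open>q\<close> to be matched left of \<open>q\<close>, so the
  prefix ending at \<open>q\<close> is balanced and \<open>q = p\<^sub>j\<close> with \<open>j \<ge> 2m\<close>. Conversely, if \<open>p\<^sub>1\<close>
  (say red) were matched beyond the balanced prefix \<open>P\<^sub>1\<close>, then some blue point of \<open>P\<^sub>1\<close> is
  also matched beyond it; taking the leftmost such blue point \<open>b\<close> and the rightmost red point
  \<open>a < b\<close> matched beyond \<open>P\<^sub>1\<close>, the edges \<open>{a,c}\<close> and \<open>{b,r}\<close> are nested with no edge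
  running from between \<open>a, b\<close> to between \<open>r, c\<close>, and replacing them by \<open>{a,b}, {r,c}\<close>
  keeps the matching non-crossing and shortens it. The colour claim is a discrete
  intermediate value argument on the red-minus-blue count of the prefixes.\<close>

lemma bichromatic_perfect_matching_swap:
  "bichromatic_perfect_matching R B M = bichromatic_perfect_matching B R M"
proof -
  have "(\<exists>r\<in>R. \<exists>b\<in>B. e = {r, b}) \<longleftrightarrow> (\<exists>b\<in>B. \<exists>r\<in>R. e = {b, r})" for e
    by (metis insert_commute)
  then show ?thesis
    unfolding bichromatic_perfect_matching_def by (simp add: Un_commute)
qed

lemma min_weight_nc_bichromatic_matching_swap:
  "min_weight_nc_bichromatic_matching R B M = min_weight_nc_bichromatic_matching B R M"
  unfolding min_weight_nc_bichromatic_matching_def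
  by (simp only: bichromatic_perfect_matching_swap[of R B])

lemma bichromatic_perfect_matching_edgeE:
  assumes "bichromatic_perfect_matching R B M" "e \<in> M"
  obtains r b where "r \<in> R" "b \<in> B" "e = {r, b}"
  using assms unfolding bichromatic_perfect_matching_def by (meson conjunct1)

lemma bichromatic_perfect_matching_coverE:
  assumes "bichromatic_perfect_matching R B M" "x \<in> R \<union> B"
  obtains e where "e \<in> M" "x \<in> e"
  using assms unfolding bichromatic_perfect_matching_def by (meson conjunct2 ex1E)

lemma bichromatic_perfect_matching_unique:
  assumes "bichromatic_perfect_matching R B M" "x \<in> R \<union> B" "e \<in> M" "f \<in> M" "x \<in> e" "x \<in> f"
  shows "e = f"
proof -
  have "\<exists>!e. e \<in> M \<and> x \<in> e"
    using assms(1,2) unfolding bichromatic_perfect_matching_def by simp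
  with assms(3-) show ?thesis by blast
qed

lemma bichromatic_perfect_matching_finite:
  assumes "bichromatic_perfect_matching R B M" "finite R" "finite B"
  shows "finite M"
proof (rule finite_subset)
  show "M \<subseteq> (\<lambda>(r, b). {r, b}) ` (R \<times> B)"
    using assms(1) by (fastforce elim: bichromatic_perfect_matching_edgeE)
qed (use assms in simp)

lemma bichromatic_perfect_matching_edge_ordered:
  assumes "bichromatic_perfect_matching R B M" "R \<inter> B = {}" "e \<in> M"
  obtains x y where "e = {x, y}" "x < y" "x \<in> R \<union> B" "y \<in> R \<union> B"
proof -
  obtain r b where rb: "r \<in> R" "b \<in> B" "e = {r, b}"
    using assms bichromatic_perfect_matching_edgeE by blast
  with assms(2) have "r < b \<or> b < r" by (metis disjoint_iff neqE)
  with rb that show ?thesis by (auto simp: insert_commute)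
qed

text \<open>\<open>partner M x\<close> is only meaningful for points covered by \<open>M\<close>; elsewhere \<open>THE\<close> is unspecified.\<close>

definition partner :: "'a set set \<Rightarrow> 'a \<Rightarrow> 'a" where
  "partner M x = (THE y. {x, y} \<in> M)"

lemma partner_eq:
  assumes bpm: "bichromatic_perfect_matching R B M" and disj: "R \<inter> B = {}"
    and xy: "{x, y} \<in> M"
  shows "partner M x = y"
proof -
  obtain r b where rb: "r \<in> R" "b \<in> B" "{x, y} = {r, b}"
    using bpm xy by (rule bichromatic_perfect_matching_edgeE)
  with disj have "x \<noteq> y" "x \<in> R \<union> B" by (auto simp: doubleton_eq_iff)
  show ?thesis unfolding partner_def
  proof (rule the_equality)
    fix z assume "{x, z} \<in> M"
    with bichromatic_perfect_matching_unique[OF bpm \<open>x \<in> R \<union> B\<close> _ xy]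
    have "{x, z} = {x, y}" by blast
    with \<open>x \<noteq> y\<close> show "z = y" by (metis doubleton_eq_iff)
  qed (fact xy)
qed

lemma partner_edge:
  assumes bpm: "bichromatic_perfect_matching R B M" and disj: "R \<inter> B = {}"
    and x: "x \<in> R \<union> B"
  shows "{x, partner M x} \<in> M" "x \<in> R \<Longrightarrow> partner M x \<in> B" "x \<in> B \<Longrightarrow> partner M x \<in> R"
proof -
  obtain e where e: "e \<in> M" "x \<in> e"
    using bpm x by (rule bichromatic_perfect_matching_coverE)
  then obtain r b where rb: "r \<in> R" "b \<in> B" "e = {r, b}"
    using bpm bichromatic_perfect_matching_edgeE by blast
  have "x = r \<and> partner M x = b \<or> x = b \<and> partner M x = r"
  proof (cases "x = r")
    case True
    with e rb have "{x, b} \<in> M" by simp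
    with True show ?thesis using partner_eq[OF bpm disj] by blast
  next
    case False
    with e rb have "x = b" "{x, r} \<in> M" by (auto simp: insert_commute)
    then show ?thesis using partner_eq[OF bpm disj] by blast
  qed
  then have "{x, partner M x} = e"
    using rb by blast
  with e show "{x, partner M x} \<in> M" by simp
  show "x \<in> R \<Longrightarrow> partner M x \<in> B" "x \<in> B \<Longrightarrow> partner M x \<in> R"
    using \<open>x = r \<and> _ \<or> _\<close> rb disj by auto
qed

lemma partner_partner:
  assumes "bichromatic_perfect_matching R B M" "R \<inter> B = {}" "x \<in> R \<union> B"
  shows "partner M (partner M x) = x"
  using partner_eq[OF assms(1,2) partner_edge(1)[OF assms, unfolded insert_commute[of x]]] .

lemma partner_in:
  assumes "bichromatic_perfect_matching R B M" "R \<inter> B = {}" "x \<in> R \<union> B"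
  shows "partner M x \<in> R \<union> B" "partner M x \<noteq> x"
proof -
  have "x \<in> R \<and> partner M x \<in> B \<or> x \<in> B \<and> partner M x \<in> R"
    using partner_edge(2,3)[OF assms] assms(3) by blast
  then show "partner M x \<in> R \<union> B" "partner M x \<noteq> x"
    using assms(2) by auto
qed

lemma partner_closed_card_le:
  assumes bpm: "bichromatic_perfect_matching R B M" and disj: "R \<inter> B = {}"
    and "finite S" and closed: "\<forall>x\<in>S \<inter> B. partner M x \<in> S"
  shows "card (S \<inter> B) \<le> card (S \<inter> R)"
proof (rule card_inj_on_le)
  show "inj_on (partner M) (S \<inter> B)"
  proof (rule inj_onI)
    fix x y assume "x \<in> S \<inter> B" "y \<in> S \<inter> B" "partner M x = partner M y"
    then have "x = partner M (partner M y)" using partner_partner[OF bpm disj, of x] by simp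
    also have "\<dots> = y" using partner_partner[OF bpm disj, of y] \<open>y \<in> S \<inter> B\<close> by simp
    finally show "x = y" .
  qed
  show "partner M ` (S \<inter> B) \<subseteq> S \<inter> R"
    using closed partner_edge(3)[OF bpm disj] by auto
qed (use \<open>finite S\<close> in simp)

lemma partner_closed_balanced:
  assumes bpm: "bichromatic_perfect_matching R B M" and disj: "R \<inter> B = {}"
    and "finite S" and closed: "\<forall>x\<in>S \<inter> (R \<union> B). partner M x \<in> S"
  shows "card (S \<inter> R) = card (S \<inter> B)"
proof (rule antisym)
  have "bichromatic_perfect_matching B R M" "B \<inter> R = {}"
    using bpm disj by (simp_all add: bichromatic_perfect_matching_swap[of R B] Int_commute)
  then show "card (S \<inter> R) \<le> card (S \<inter> B)"
    using partner_closed_card_le \<open>finite S\<close> closed by blast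
  show "card (S \<inter> B) \<le> card (S \<inter> R)"
    using partner_closed_card_le[OF bpm disj \<open>finite S\<close>] closed by blast
qed

lemma Min_Max_doubleton:
  fixes x y :: "'a::linorder"
  assumes "x < y"
  shows "Min {x, y} = x" "Max {x, y} = y"
  using assms by auto

definition crossing :: "real set \<Rightarrow> real set \<Rightarrow> bool" where
  "crossing e f \<longleftrightarrow> Min e < Min f \<and> Min f < Max e \<and> Max e < Max f"

lemma crossing_doubletons:
  assumes "x < y" "u < v"
  shows "crossing {x, y} {u, v} \<longleftrightarrow> x < u \<and> u < y \<and> y < v"
  using assms by (simp add: crossing_def Min_Max_doubleton)

lemma noncrossing_iff: "noncrossing M \<longleftrightarrow> (\<forall>e\<in>M. \<forall>f\<in>M. \<not> crossing e f)"
  unfolding noncrossing_def crossing_def ..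

lemma noncrossingD:
  assumes "noncrossing M" "e \<in> M" "f \<in> M"
  shows "\<not> crossing e f"
  using assms unfolding noncrossing_iff by blast

lemma replace_edges_unique_cover:
  assumes cover: "\<exists>!e. e \<in> M \<and> x \<in> e" and e: "e1 \<in> M" "e2 \<in> M"
    and same_points: "f1 \<union> f2 = e1 \<union> e2" and "f1 \<inter> f2 = {}"
  shows "\<exists>!e. e \<in> insert f1 (insert f2 (M - {e1, e2})) \<and> x \<in> e"
    (is "\<exists>!e. e \<in> ?M' \<and> x \<in> e")
proof (cases "x \<in> e1 \<union> e2")
  case True
  then obtain f where f: "f \<in> {f1, f2}" "x \<in> f"
    using same_points by blast
  have "x \<notin> g" if "g \<in> M - {e1, e2}" for g
    using True that e cover by blast
  with f \<open>f1 \<inter> f2 = {}\<close> have only_f: "g = f" if "g \<in> ?M'" "x \<in> g" for g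
    using that by blast
  show ?thesis
  proof (rule ex1I)
    show "f \<in> ?M' \<and> x \<in> f" using f by blast
  qed (use only_f in blast)
next
  case False
  obtain e where "e \<in> M" "x \<in> e"
    using cover by blast
  with False have "e \<in> ?M'" by auto
  have only_e: "g = e" if "g \<in> ?M'" "x \<in> g" for g
  proof -
    have "x \<notin> f1" "x \<notin> f2" using False same_points by auto
    with that have "g \<in> M" by auto
    with \<open>e \<in> M\<close> \<open>x \<in> e\<close> \<open>x \<in> g\<close> cover show ?thesis by blast
  qed
  show ?thesis
  proof (rule ex1I)
    show "e \<in> ?M' \<and> x \<in> e" using \<open>e \<in> ?M'\<close> \<open>x \<in> e\<close> ..
  qed (use only_e in blast)
qed

lemma bichromatic_perfect_matching_replace_edges:
  assumes bpm: "bichromatic_perfect_matching R B M" and e: "e1 \<in> M" "e2 \<in> M"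
    and new_edges: "\<exists>r\<in>R. \<exists>b\<in>B. f1 = {r, b}" "\<exists>r\<in>R. \<exists>b\<in>B. f2 = {r, b}"
    and same_points: "f1 \<union> f2 = e1 \<union> e2" and "f1 \<inter> f2 = {}"
  shows "bichromatic_perfect_matching R B (insert f1 (insert f2 (M - {e1, e2})))"
  unfolding bichromatic_perfect_matching_def
proof (intro conjI ballI)
  fix g assume "g \<in> insert f1 (insert f2 (M - {e1, e2}))"
  then consider "g = f1" | "g = f2" | "g \<in> M" by blast
  then show "\<exists>r\<in>R. \<exists>b\<in>B. g = {r, b}"
  proof cases
    case 3
    obtain r b where "r \<in> R" "b \<in> B" "g = {r, b}"
      using bpm 3 by (rule bichromatic_perfect_matching_edgeE)
    then show ?thesis by blast
  qed (use new_edges in simp_all)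
next
  fix x assume "x \<in> R \<union> B"
  with bpm have "\<exists>!e. e \<in> M \<and> x \<in> e"
    unfolding bichromatic_perfect_matching_def by simp
  then show "\<exists>!e. e \<in> insert f1 (insert f2 (M - {e1, e2})) \<and> x \<in> e"
    using e same_points \<open>f1 \<inter> f2 = {}\<close> by (rule replace_edges_unique_cover)
qed

lemma matching_weight_replace_edges:
  assumes "finite M" "e1 \<in> M" "e2 \<in> M" "e1 \<noteq> e2" "f1 \<noteq> f2"
    and "f1 \<notin> M - {e1, e2}" "f2 \<notin> M - {e1, e2}"
  shows "matching_weight (insert f1 (insert f2 (M - {e1, e2}))) + (Max e1 - Min e1) + (Max e2 - Min e2)
           = matching_weight M + (Max f1 - Min f1) + (Max f2 - Min f2)"
proof -
  have "matching_weight M = matching_weight (M - {e1, e2}) + (Max e1 - Min e1) + (Max e2 - Min e2)"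
    using assms(1-4) sum.subset_diff[of "{e1, e2}" M "\<lambda>e. Max e - Min e"]
    unfolding matching_weight_def by simp
  moreover have "matching_weight (insert f1 (insert f2 (M - {e1, e2})))
      = (Max f1 - Min f1) + (Max f2 - Min f2) + matching_weight (M - {e1, e2})"
    using assms(1,5-7) unfolding matching_weight_def by simp
  ultimately show ?thesis by simp
qed

lemma nested_swap_creates_no_crossing:
  fixes a b r c x y :: real
  assumes ord: "a < b" "b < r" "r < c" "x < y" and distinct: "{x, y} \<inter> {a, b, r, c} = {}"
    and "\<not> crossing {x, y} {a, c}" "\<not> crossing {a, c} {x, y}"
    and "\<not> crossing {x, y} {b, r}" "\<not> crossing {b, r} {x, y}"
    and no_bridge: "\<not> (a < x \<and> x < b \<and> r < y \<and> y < c)"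
  shows "\<not> crossing {x, y} {a, b} \<and> \<not> crossing {a, b} {x, y} \<and>
         \<not> crossing {x, y} {r, c} \<and> \<not> crossing {r, c} {x, y}"
  using assms by (simp add: crossing_doubletons) (smt (verit))

lemma noncrossing_swap_nested_edges:
  assumes bpm: "bichromatic_perfect_matching R B M" and nc: "noncrossing M"
    and disj: "R \<inter> B = {}"
    and col: "a \<in> R" "r \<in> R" "b \<in> B" "c \<in> B"
    and outer: "{a, c} \<in> M" and inner: "{b, r} \<in> M"
    and ord: "a < b" "b < r" "r < c"
    and no_bridge: "\<forall>h\<in>M. \<not> (a < Min h \<and> Min h < b \<and> r < Max h \<and> Max h < c)"
  shows "noncrossing (insert {a, b} (insert {r, c} (M - {{a, c}, {b, r}})))"
proof -
  define M0 where "M0 = M - {{a, c}, {b, r}}"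
  have avoid: "{a, b, c, r} \<inter> f = {}" if "f \<in> M0" for f
    using that col bichromatic_perfect_matching_unique[OF bpm] outer inner unfolding M0_def by blast
  have old: "\<not> crossing f {a, b} \<and> \<not> crossing {a, b} f \<and> \<not> crossing f {r, c} \<and> \<not> crossing {r, c} f"
    if f: "f \<in> M0" for f
  proof -
    have "f \<in> M" using f unfolding M0_def by blast
    then obtain x y where xy: "f = {x, y}" "x < y"
      using bichromatic_perfect_matching_edge_ordered[OF bpm disj] by metis
    show ?thesis
      unfolding xy(1)
    proof (rule nested_swap_creates_no_crossing[OF ord xy(2)])
      show "{x, y} \<inter> {a, b, r, c} = {}" using avoid[OF f] xy(1) by blast
      show "\<not> (a < x \<and> x < b \<and> r < y \<and> y < c)"
        using no_bridge[rule_format, OF \<open>f \<in> M\<close>] xy by (simp add: Min_Max_doubleton)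
    qed (use noncrossingD[OF nc] \<open>f \<in> M\<close> outer inner xy(1) in blast)+
  qed
  show ?thesis
    unfolding M0_def[symmetric] noncrossing_iff
  proof (intro ballI)
    fix e f assume "e \<in> insert {a, b} (insert {r, c} M0)" "f \<in> insert {a, b} (insert {r, c} M0)"
    then have "e \<in> M0 \<or> e \<in> {{a, b}, {r, c}}" "f \<in> M0 \<or> f \<in> {{a, b}, {r, c}}"
      by blast+
    then show "\<not> crossing e f"
    proof (elim disjE)
      assume "e \<in> M0" "f \<in> M0"
      then show ?thesis using noncrossingD[OF nc] unfolding M0_def by blast
    next
      assume "e \<in> M0" "f \<in> {{a, b}, {r, c}}"
      then show ?thesis using old by blast
    next
      assume "e \<in> {{a, b}, {r, c}}" "f \<in> M0"
      then show ?thesis using old by blast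
    next
      assume "e \<in> {{a, b}, {r, c}}" "f \<in> {{a, b}, {r, c}}"
      then show ?thesis using ord by (auto simp: crossing_doubletons)
    qed
  qed
qed

lemma nested_edges_exchange:
  assumes bpm: "bichromatic_perfect_matching R B M" and nc: "noncrossing M"
    and disj: "R \<inter> B = {}" and "finite M"
    and col: "a \<in> R" "r \<in> R" "b \<in> B" "c \<in> B"
    and outer: "{a, c} \<in> M" and inner: "{b, r} \<in> M"
    and ord: "a < b" "b < r" "r < c"
    and no_bridge: "\<forall>h\<in>M. \<not> (a < Min h \<and> Min h < b \<and> r < Max h \<and> Max h < c)"
  shows "\<exists>M'. bichromatic_perfect_matching R B M' \<and> noncrossing M' \<and>
           matching_weight M' < matching_weight M"
proof -
  define M0 where "M0 = M - {{a, c}, {b, r}}"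
  define M' where "M' = insert {a, b} (insert {r, c} M0)"
  have avoid: "{a, b, c, r} \<inter> f = {}" if "f \<in> M0" for f
    using that col bichromatic_perfect_matching_unique[OF bpm] outer inner unfolding M0_def by blast
  have bpm': "bichromatic_perfect_matching R B M'"
    unfolding M'_def M0_def
    by (rule bichromatic_perfect_matching_replace_edges[OF bpm outer inner]) (use col ord in auto)
  have nc': "noncrossing M'"
    unfolding M'_def M0_def by (rule noncrossing_swap_nested_edges[OF assms(1-3,5-)])
  have "{a, c} \<noteq> {b, r}" "{a, b} \<noteq> {r, c}" "{a, b} \<notin> M0" "{r, c} \<notin> M0"
    using avoid ord by (auto simp: doubleton_eq_iff)
  then have "matching_weight M' + (c - a) + (r - b) = matching_weight M + (b - a) + (c - r)"
    using matching_weight_replace_edges[OF \<open>finite M\<close> outer inner] ord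
    unfolding M'_def M0_def by (simp add: Min_Max_doubleton)
  then have "matching_weight M' < matching_weight M"
    using ord by simp
  with bpm' nc' show ?thesis by blast
qed

lemma balanced_prefix_blue_leaves:
  assumes bpm: "bichromatic_perfect_matching R B M" and disj: "R \<inter> B = {}"
    and "finite R" "finite B"
    and a0: "a0 \<in> R" "a0 \<le> g" "g < partner M a0"
    and bal: "card ({x\<in>R \<union> B. x \<le> g} \<inter> R) = card ({x\<in>R \<union> B. x \<le> g} \<inter> B)"
  shows "\<exists>x\<in>B. x \<le> g \<and> g < partner M x"
proof -
  define P where "P = {x\<in>R \<union> B. x \<le> g}"
  define S where "S = P - {a0}"
  have "finite S" "finite (P \<inter> R)"
    unfolding S_def P_def using \<open>finite R\<close> \<open>finite B\<close> by simp_all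
  have "a0 \<in> P \<inter> R"
    unfolding P_def using a0 by simp
  moreover have "S \<inter> R = P \<inter> R - {a0}"
    unfolding S_def by blast
  ultimately have "card (S \<inter> R) = card (P \<inter> R) - 1" "card (P \<inter> R) > 0"
    using \<open>finite (P \<inter> R)\<close> by (auto simp: card_gt_0_iff)
  moreover have "S \<inter> B = P \<inter> B"
    unfolding S_def using a0(1) disj by auto
  ultimately have "card (S \<inter> R) < card (S \<inter> B)"
    using bal unfolding P_def by simp
  then obtain x where x: "x \<in> S \<inter> B" "partner M x \<notin> S"
    using partner_closed_card_le[OF bpm disj \<open>finite S\<close>] by fastforce
  then have "x \<in> R \<union> B" by blast
  have "partner M x \<noteq> a0"
  proof
    assume "partner M x = a0"
    then have "partner M a0 = x"
      using partner_partner[OF bpm disj \<open>x \<in> R \<union> B\<close>] by simp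
    with x a0 show False unfolding S_def P_def by auto
  qed
  with x partner_in(1)[OF bpm disj \<open>x \<in> R \<union> B\<close>] show ?thesis
    unfolding S_def P_def by auto
qed

lemma extremal_points_leaving_balanced_prefix:
  assumes bpm: "bichromatic_perfect_matching R B M" and disj: "R \<inter> B = {}"
    and fin: "finite R" "finite B"
    and a0: "a0 \<in> R" "\<forall>x\<in>R \<union> B. a0 \<le> x" "a0 \<le> g" "g < partner M a0"
    and bal: "card ({x\<in>R \<union> B. x \<le> g} \<inter> R) = card ({x\<in>R \<union> B. x \<le> g} \<inter> B)"
  obtains a b where "a \<in> R" "b \<in> B" "a < b" "b \<le> g" "g < partner M a" "g < partner M b"
    "\<And>u. u \<in> B \<Longrightarrow> u \<le> g \<Longrightarrow> g < partner M u \<Longrightarrow> b \<le> u"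
    "\<And>u. u \<in> R \<Longrightarrow> u < b \<Longrightarrow> g < partner M u \<Longrightarrow> u \<le> a"
proof -
  define BL where "BL = {x\<in>B. x \<le> g \<and> g < partner M x}"
  define b where "b = Min BL"
  have "finite BL" "BL \<noteq> {}"
    unfolding BL_def using fin balanced_prefix_blue_leaves[OF bpm disj fin a0(1,3,4) bal] by auto
  then have b: "b \<in> B" "b \<le> g" "g < partner M b" and b_min: "\<And>x. x \<in> BL \<Longrightarrow> b \<le> x"
    unfolding b_def using Min_in[of BL] by (auto simp: BL_def)
  define RL where "RL = {x\<in>R. x < b \<and> g < partner M x}"
  define a where "a = Max RL"
  have "a0 \<noteq> b" using a0(1) b(1) disj by auto
  then have "a0 \<in> RL" unfolding RL_def using a0 b by force
  moreover have "finite RL" unfolding RL_def using fin by simp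
  ultimately have "a \<in> RL" and a_max: "\<And>x. x \<in> RL \<Longrightarrow> x \<le> a"
    unfolding a_def using Max_in by auto
  then have "a \<in> R" "a < b" "g < partner M a"
    unfolding RL_def by simp_all
  with that b b_min a_max show ?thesis
    unfolding BL_def RL_def by blast
qed

lemma nested_edges_across_balanced_prefix:
  assumes bpm: "bichromatic_perfect_matching R B M" and nc: "noncrossing M"
    and disj: "R \<inter> B = {}" and fin: "finite R" "finite B"
    and a0: "a0 \<in> R" "\<forall>x\<in>R \<union> B. a0 \<le> x" "a0 \<le> g" "g < partner M a0"
    and bal: "card ({x\<in>R \<union> B. x \<le> g} \<inter> R) = card ({x\<in>R \<union> B. x \<le> g} \<inter> B)"
  obtains a b r c where "a \<in> R" "r \<in> R" "b \<in> B" "c \<in> B" "{a, c} \<in> M" "{b, r} \<in> M"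
    "a < b" "b < r" "r < c" "\<forall>h\<in>M. \<not> (a < Min h \<and> Min h < b \<and> r < Max h \<and> Max h < c)"
proof -
  obtain a b where a: "a \<in> R" "a < b" "g < partner M a" and b: "b \<in> B" "b \<le> g" "g < partner M b"
    and b_min: "\<And>u. u \<in> B \<Longrightarrow> u \<le> g \<Longrightarrow> g < partner M u \<Longrightarrow> b \<le> u"
    and a_max: "\<And>u. u \<in> R \<Longrightarrow> u < b \<Longrightarrow> g < partner M u \<Longrightarrow> u \<le> a"
    using extremal_points_leaving_balanced_prefix[OF bpm disj fin a0 bal] by metis
  define c where "c = partner M a"
  define r where "r = partner M b"
  have outer: "{a, c} \<in> M" and "c \<in> B"
    unfolding c_def using partner_edge[OF bpm disj] a(1) by auto
  have inner: "{b, r} \<in> M" and "r \<in> R"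
    unfolding r_def using partner_edge[OF bpm disj] b(1) by auto
  have "b < r" "a < c" "b < c"
    using a b unfolding r_def c_def by simp_all
  then have "\<not> (a < b \<and> b < c \<and> c < r)"
    using noncrossingD[OF nc outer inner] by (simp add: crossing_doubletons)
  moreover have "c \<noteq> r" using \<open>c \<in> B\<close> \<open>r \<in> R\<close> disj by auto
  ultimately have "r < c" using a(2) \<open>b < c\<close> by linarith
  txt \<open>A bridging edge would start at a point strictly between \<open>a\<close> and \<open>b\<close> that is matched
    beyond \<open>g\<close>, contradicting the extremal choice of \<open>a\<close> or \<open>b\<close>.\<close>
  have "\<not> (a < Min h \<and> Min h < b \<and> r < Max h \<and> Max h < c)" if "h \<in> M" for h
  proof
    assume h: "a < Min h \<and> Min h < b \<and> r < Max h \<and> Max h < c"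
    obtain u v where uv: "h = {u, v}" "u < v" "u \<in> R \<union> B"
      using bichromatic_perfect_matching_edge_ordered[OF bpm disj \<open>h \<in> M\<close>] by metis
    then have "partner M u = v" using partner_eq[OF bpm disj] \<open>h \<in> M\<close> by simp
    moreover have "a < u" "u < b" "r < v" using h uv by (simp_all add: Min_Max_doubleton)
    ultimately have "g < partner M u"
      using b(3) unfolding r_def by simp
    with uv(3) b_min a_max \<open>a < u\<close> \<open>u < b\<close> b(2) show False
      by fastforce
  qed
  with that a(1,2) b(1) \<open>r \<in> R\<close> \<open>c \<in> B\<close> outer inner \<open>b < r\<close> \<open>r < c\<close> show ?thesis
    by blast
qed

lemma leftmost_red_partner_within_balanced_prefix:
  assumes mw: "min_weight_nc_bichromatic_matching R B M" and disj: "R \<inter> B = {}"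
    and fin: "finite R" "finite B"
    and a0: "a0 \<in> R" "\<forall>x\<in>R \<union> B. a0 \<le> x" "a0 \<le> g"
    and bal: "card ({x\<in>R \<union> B. x \<le> g} \<inter> R) = card ({x\<in>R \<union> B. x \<le> g} \<inter> B)"
  shows "partner M a0 \<le> g"
proof (rule ccontr)
  assume "\<not> partner M a0 \<le> g"
  then have "g < partner M a0" by simp
  have bpm: "bichromatic_perfect_matching R B M" and nc: "noncrossing M"
    and minimal: "\<And>M'. bichromatic_perfect_matching R B M' \<Longrightarrow> noncrossing M' \<Longrightarrow>
                     matching_weight M \<le> matching_weight M'"
    using mw unfolding min_weight_nc_bichromatic_matching_def by blast+
  obtain a b r c where "a \<in> R" "r \<in> R" "b \<in> B" "c \<in> B" "{a, c} \<in> M" "{b, r} \<in> M"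
    "a < b" "b < r" "r < c" "\<forall>h\<in>M. \<not> (a < Min h \<and> Min h < b \<and> r < Max h \<and> Max h < c)"
    using nested_edges_across_balanced_prefix[OF bpm nc disj fin a0 \<open>g < partner M a0\<close> bal] .
  moreover have "finite M"
    using bichromatic_perfect_matching_finite[OF bpm fin] .
  ultimately obtain M' where "bichromatic_perfect_matching R B M'" "noncrossing M'"
      "matching_weight M' < matching_weight M"
    using nested_edges_exchange[OF bpm nc disj] by blast
  with minimal show False by fastforce
qed

lemma leftmost_partner_within_balanced_prefix:
  assumes mw: "min_weight_nc_bichromatic_matching R B M" and disj: "R \<inter> B = {}"
    and fin: "finite R" "finite B"
    and a0: "a0 \<in> R \<union> B" "\<forall>x\<in>R \<union> B. a0 \<le> x" "a0 \<le> g"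
    and bal: "card ({x\<in>R \<union> B. x \<le> g} \<inter> R) = card ({x\<in>R \<union> B. x \<le> g} \<inter> B)"
  shows "partner M a0 \<le> g"
proof (cases "a0 \<in> R")
  case True
  with assms show ?thesis by (intro leftmost_red_partner_within_balanced_prefix)
next
  case False
  have "min_weight_nc_bichromatic_matching B R M"
    using mw by (simp only: min_weight_nc_bichromatic_matching_swap[of R B])
  moreover have "card ({x\<in>B \<union> R. x \<le> g} \<inter> B) = card ({x\<in>B \<union> R. x \<le> g} \<inter> R)"
    using bal by (simp add: Un_commute)
  moreover have "B \<inter> R = {}" "a0 \<in> B" "\<forall>x\<in>B \<union> R. a0 \<le> x"
    using disj False a0 by auto
  ultimately show ?thesis
    using leftmost_red_partner_within_balanced_prefix fin a0(3) by blast
qed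

lemma leftmost_edge_encloses_partners:
  assumes bpm: "bichromatic_perfect_matching R B M" and nc: "noncrossing M"
    and disj: "R \<inter> B = {}"
    and x0: "x0 \<in> R \<union> B" "\<forall>x\<in>R \<union> B. x0 \<le> x"
    and x: "x \<in> R \<union> B" "x \<le> partner M x0"
  shows "partner M x \<le> partner M x0"
proof (rule ccontr)
  define q where "q = partner M x0"
  define y where "y = partner M x"
  assume "\<not> partner M x \<le> partner M x0"
  then have "q < y" unfolding q_def y_def by simp
  have "q \<noteq> x0" "q \<in> R \<union> B"
    unfolding q_def using partner_in[OF bpm disj x0(1)] by simp_all
  then have "x0 < q" using x0(2) by force
  have "x \<noteq> x0" using \<open>q < y\<close> unfolding q_def y_def by auto
  moreover have "x \<noteq> q"
    using \<open>q < y\<close> \<open>x0 < q\<close> partner_partner[OF bpm disj x0(1)] unfolding q_def y_def by auto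
  ultimately have "x0 < x" "x < q" using x0 x unfolding q_def by force+
  have "{x0, q} \<in> M" "{x, y} \<in> M"
    unfolding q_def y_def using partner_edge(1)[OF bpm disj] x0(1) x(1) by auto
  then have "\<not> crossing {x0, q} {x, y}"
    by (rule noncrossingD[OF nc])
  then show False
    using \<open>x0 < x\<close> \<open>x < q\<close> \<open>q < y\<close> \<open>x0 < q\<close> by (simp add: crossing_doubletons)
qed

lemma leftmost_partner_prefix_balanced:
  assumes bpm: "bichromatic_perfect_matching R B M" and nc: "noncrossing M"
    and disj: "R \<inter> B = {}" and fin: "finite R" "finite B"
    and x0: "x0 \<in> R \<union> B" "\<forall>x\<in>R \<union> B. x0 \<le> x"
  shows "card ({x\<in>R \<union> B. x \<le> partner M x0} \<inter> R) = card ({x\<in>R \<union> B. x \<le> partner M x0} \<inter> B)"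
proof (rule partner_closed_balanced[OF bpm disj])
  show "finite {x\<in>R \<union> B. x \<le> partner M x0}" using fin by simp
  show "\<forall>x\<in>{x\<in>R \<union> B. x \<le> partner M x0} \<inter> (R \<union> B). partner M x \<in> {x\<in>R \<union> B. x \<le> partner M x0}"
    using leftmost_edge_encloses_partners[OF bpm nc disj x0] partner_in(1)[OF bpm disj] by auto
qed

lemma card_indices_eq_card_prefix:
  fixes p :: "nat \<Rightarrow> 'a::linorder"
  assumes mono: "strict_mono_on {1..N} p" and k: "k \<in> {1..N}"
  shows "card {i\<in>{1..k}. p i \<in> C} = card ({x\<in>p ` {1..N}. x \<le> p k} \<inter> C)"
proof -
  have "{x\<in>p ` {1..N}. x \<le> p k} \<inter> C = p ` {i\<in>{1..k}. p i \<in> C}"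
    using k strict_mono_on_less_eq[OF mono] by fastforce
  moreover have "inj_on p {i\<in>{1..k}. p i \<in> C}"
    by (rule inj_on_subset[OF strict_mono_on_imp_inj_on[OF mono]]) (use k in auto)
  ultimately show ?thesis by (simp add: card_image)
qed

lemma card_indices_two_colours:
  assumes "C \<inter> D = {}" "p ` {1..k} \<subseteq> C \<union> D"
  shows "card {i\<in>{1..k}. p i \<in> C} + card {i\<in>{1..k}. p i \<in> D} = k"
proof -
  have "{i\<in>{1..k}. p i \<in> C} \<union> {i\<in>{1..k}. p i \<in> D} = {1..k}"
    using assms(2) by auto
  moreover have "{i\<in>{1..k}. p i \<in> C} \<inter> {i\<in>{1..k}. p i \<in> D} = {}"
    using assms(1) by auto
  ultimately show ?thesis
    using card_Un_disjoint[of "{i\<in>{1..k}. p i \<in> C}" "{i\<in>{1..k}. p i \<in> D}"] by simp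
qed

lemma balanced_indices_even:
  assumes "C \<inter> D = {}" "p ` {1..k} \<subseteq> C \<union> D"
    and "card {i\<in>{1..k}. p i \<in> C} = card {i\<in>{1..k}. p i \<in> D}"
  shows "k = 2 * card {i\<in>{1..k}. p i \<in> C}"
  using card_indices_two_colours[OF assms(1,2)] assms(3) by simp

lemma card_indices_Suc:
  "card {i\<in>{1..Suc k}. P i} = card {i\<in>{1..k}. P i} + (if P (Suc k) then 1 else 0)"
proof -
  have "{i\<in>{1..Suc k}. P i} = (if P (Suc k) then insert (Suc k) {i\<in>{1..k}. P i} else {i\<in>{1..k}. P i})"
    by (auto simp: le_Suc_eq)
  then show ?thesis by simp
qed

lemma int_discrete_ivt:
  fixes f :: "nat \<Rightarrow> int"
  assumes "\<forall>i<b. \<bar>f (Suc i) - f i\<bar> \<le> 1" "a \<le> b" "f a > 0" "f b < 0"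
  shows "\<exists>i. a < i \<and> i < b \<and> f i = 0"
  using assms
proof (induction b)
  case (Suc b)
  show ?case
  proof (cases "a = Suc b")
    case False
    then have "a \<le> b" using Suc.prems(2) by simp
    consider "f b < 0" | "f b = 0" | "f b > 0" by linarith
    then show ?thesis
    proof cases
      case 1
      then show ?thesis using Suc.IH[OF _ \<open>a \<le> b\<close> Suc.prems(3)] Suc.prems(1) by force
    next
      case 2
      with \<open>a \<le> b\<close> Suc.prems(3) have "a < b"
        using le_neq_implies_less by fastforce
      with 2 show ?thesis by auto
    next
      case 3
      then show ?thesis using Suc.prems(1,4) by force
    qed
  qed (use Suc.prems in simp)
qed simp

lemma first_balanced_prefix_ends_opposite:
  fixes p :: "nat \<Rightarrow> 'a"
  assumes disj: "C \<inter> D = {}" and colours: "p ` {1..2*m} \<subseteq> C \<union> D" and "1 \<le> m"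
    and bal: "card {i\<in>{1..2*m}. p i \<in> C} = card {i\<in>{1..2*m}. p i \<in> D}"
    and first: "\<forall>k. 1 \<le> k \<and> k < m \<longrightarrow>
                  card {i\<in>{1..2*k}. p i \<in> C} \<noteq> card {i\<in>{1..2*k}. p i \<in> D}"
    and "p 1 \<in> C"
  shows "p (2*m) \<in> D"
proof (rule ccontr)
  assume "p (2*m) \<notin> D"
  define excess where
    "excess k = int (card {i\<in>{1..k}. p i \<in> C}) - int (card {i\<in>{1..k}. p i \<in> D})" for k
  have step: "excess (Suc k) = excess k + (if p (Suc k) \<in> C then 1 else -1)" if "Suc k \<le> 2*m" for k
  proof -
    have "p (Suc k) \<in> C \<union> D" using colours that by (simp add: image_subset_iff)
    then show ?thesis
      unfolding excess_def card_indices_Suc using disj by auto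
  qed
  have "excess 1 = 1"
    using step[of 0] \<open>1 \<le> m\<close> \<open>p 1 \<in> C\<close> by (simp add: excess_def)
  moreover have "excess (2*m - 1) = -1"
  proof -
    have "p (2*m) \<in> C \<union> D"
      using \<open>1 \<le> m\<close> by (intro subsetD[OF colours]) auto
    with \<open>p (2*m) \<notin> D\<close> have "p (2*m) \<in> C" by simp
    moreover have "excess (2*m) = 0" using bal by (simp add: excess_def)
    ultimately show ?thesis using step[of "2*m - 1"] \<open>1 \<le> m\<close> by simp
  qed
  moreover have "\<forall>i<2*m - 1. \<bar>excess (Suc i) - excess i\<bar> \<le> 1"
    using step by simp
  moreover have "1 \<le> 2*m - 1" using \<open>1 \<le> m\<close> by simp
  ultimately obtain i where i: "1 < i" "i < 2*m - 1" "excess i = 0"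
    using int_discrete_ivt[of "2*m - 1" excess 1] by auto
  define k where "k = card {j\<in>{1..i}. p j \<in> C}"
  have "{1..i} \<subseteq> {1..2*m}" using i by auto
  then have "p ` {1..i} \<subseteq> C \<union> D" using colours by blast
  with i(3) have "i = 2*k"
    unfolding k_def using balanced_indices_even[OF disj] by (simp add: excess_def)
  with i have "1 \<le> k" "k < m" by auto
  with first have "card {j\<in>{1..2*k}. p j \<in> C} \<noteq> card {j\<in>{1..2*k}. p j \<in> D}" by blast
  with \<open>i = 2*k\<close> i(3) show False
    unfolding excess_def by simp
qed

lemma first_balanced_prefix_endpoints_differ:
  fixes p :: "nat \<Rightarrow> 'a"
  assumes disj: "C \<inter> D = {}" and colours: "p ` {1..2*m} \<subseteq> C \<union> D" and "1 \<le> m"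
    and bal: "card {i\<in>{1..2*m}. p i \<in> C} = card {i\<in>{1..2*m}. p i \<in> D}"
    and first: "\<forall>k. 1 \<le> k \<and> k < m \<longrightarrow>
                  card {i\<in>{1..2*k}. p i \<in> C} \<noteq> card {i\<in>{1..2*k}. p i \<in> D}"
  shows "(p 1 \<in> C \<and> p (2*m) \<in> D) \<or> (p 1 \<in> D \<and> p (2*m) \<in> C)"
proof -
  have "p 1 \<in> C \<union> D" using \<open>1 \<le> m\<close> by (intro subsetD[OF colours]) auto
  moreover have "p 1 \<in> C \<Longrightarrow> p (2*m) \<in> D"
    by (rule first_balanced_prefix_ends_opposite[OF assms])
  moreover have "p 1 \<in> D \<Longrightarrow> p (2*m) \<in> C"
  proof (rule first_balanced_prefix_ends_opposite)
    show "D \<inter> C = {}" "p ` {1..2*m} \<subseteq> D \<union> C" using disj colours by auto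
    show "card {i\<in>{1..2*m}. p i \<in> D} = card {i\<in>{1..2*m}. p i \<in> C}" using bal by simp
    show "\<forall>k. 1 \<le> k \<and> k < m \<longrightarrow> card {i\<in>{1..2*k}. p i \<in> D} \<noteq> card {i\<in>{1..2*k}. p i \<in> C}"
      using first by auto
  qed (use \<open>1 \<le> m\<close> in simp_all)
  ultimately show ?thesis by blast
qed

lemma leftmost_partner_balanced_index:
  fixes p :: "nat \<Rightarrow> real"
  assumes bpm: "bichromatic_perfect_matching R B M" and nc: "noncrossing M"
    and fin: "finite R" "finite B" and disj: "R \<inter> B = {}"
    and mono: "strict_mono_on {1..N} p" and points: "p ` {1..N} = R \<union> B" and "1 \<le> N"
  obtains k where "1 \<le> k" "2*k \<le> N" "partner M (p 1) = p (2*k)"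
    "card {i\<in>{1..2*k}. p i \<in> R} = card {i\<in>{1..2*k}. p i \<in> B}"
proof -
  have "1 \<in> {1..N}" using \<open>1 \<le> N\<close> by simp
  then have leftmost: "\<forall>x\<in>R \<union> B. p 1 \<le> x" and "p 1 \<in> R \<union> B"
    unfolding points[symmetric] using strict_mono_on_less_eq[OF mono] by auto
  define q where "q = partner M (p 1)"
  have "q \<in> R \<union> B" "q \<noteq> p 1"
    unfolding q_def using partner_in[OF bpm disj \<open>p 1 \<in> R \<union> B\<close>] by simp_all
  obtain j where j: "j \<in> {1..N}" "q = p j"
    using \<open>q \<in> R \<union> B\<close> unfolding points[symmetric] by blast
  with \<open>q \<noteq> p 1\<close> have "j \<noteq> 1" by auto
  define k where "k = card {i\<in>{1..j}. p i \<in> R}"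
  have bal_j: "k = card {i\<in>{1..j}. p i \<in> B}"
    unfolding k_def using leftmost_partner_prefix_balanced[OF bpm nc disj fin \<open>p 1 \<in> R \<union> B\<close> leftmost]
      card_indices_eq_card_prefix[OF mono j(1)] points j(2) q_def by simp
  moreover have "p ` {1..j} \<subseteq> R \<union> B"
    unfolding points[symmetric] using j(1) by (intro image_mono) auto
  ultimately have "j = 2*k"
    unfolding k_def by (intro balanced_indices_even[OF disj])
  show ?thesis
  proof (rule that)
    show "1 \<le> k" "2*k \<le> N" using \<open>j = 2*k\<close> \<open>j \<noteq> 1\<close> j(1) by auto
    show "partner M (p 1) = p (2*k)" using \<open>j = 2*k\<close> j(2) unfolding q_def by simp
    show "card {i\<in>{1..2*k}. p i \<in> R} = card {i\<in>{1..2*k}. p i \<in> B}"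
      using bal_j \<open>j = 2*k\<close> unfolding k_def by simp
  qed
qed

lemma min_weight_matching_contains_first_balanced_edge:
  fixes p :: "nat \<Rightarrow> real"
  assumes mw: "min_weight_nc_bichromatic_matching R B M"
    and fin: "finite R" "finite B" and disj: "R \<inter> B = {}"
    and mono: "strict_mono_on {1..N} p" and points: "p ` {1..N} = R \<union> B"
    and "1 \<le> m" "2*m \<le> N"
    and bal: "card {i\<in>{1..2*m}. p i \<in> R} = card {i\<in>{1..2*m}. p i \<in> B}"
    and first: "\<forall>k. 1 \<le> k \<and> k < m \<longrightarrow>
                  card {i\<in>{1..2*k}. p i \<in> R} \<noteq> card {i\<in>{1..2*k}. p i \<in> B}"
  shows "{p 1, p (2*m)} \<in> M"
proof -
  have bpm: "bichromatic_perfect_matching R B M" and nc: "noncrossing M"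
    using mw unfolding min_weight_nc_bichromatic_matching_def by blast+
  have "1 \<in> {1..N}" "2*m \<in> {1..N}" using \<open>1 \<le> m\<close> \<open>2*m \<le> N\<close> by auto
  then have leftmost: "\<forall>x\<in>R \<union> B. p 1 \<le> x" and "p 1 \<in> R \<union> B"
    unfolding points[symmetric] using strict_mono_on_less_eq[OF mono] by auto
  obtain k where k: "1 \<le> k" "2*k \<le> N" "partner M (p 1) = p (2*k)"
    and bal_k: "card {i\<in>{1..2*k}. p i \<in> R} = card {i\<in>{1..2*k}. p i \<in> B}"
    using leftmost_partner_balanced_index[OF bpm nc fin disj mono points] \<open>2*m \<le> N\<close> \<open>1 \<le> m\<close> by auto
  from first k(1) bal_k have "m \<le> k" by (meson not_le)
  moreover have "partner M (p 1) \<le> p (2*m)"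
  proof (rule leftmost_partner_within_balanced_prefix[OF mw disj fin \<open>p 1 \<in> R \<union> B\<close> leftmost])
    show "p 1 \<le> p (2*m)" using leftmost points \<open>2*m \<in> {1..N}\<close> by blast
    show "card ({x\<in>R \<union> B. x \<le> p (2*m)} \<inter> R) = card ({x\<in>R \<union> B. x \<le> p (2*m)} \<inter> B)"
      using bal card_indices_eq_card_prefix[OF mono \<open>2*m \<in> {1..N}\<close>] points by simp
  qed
  then have "k \<le> m"
    using strict_mono_on_less_eq[OF mono _ \<open>2*m \<in> {1..N}\<close>, of "2*k"] k by simp
  ultimately have "partner M (p 1) = p (2*m)" using k(3) by simp
  then show ?thesis
    using partner_edge(1)[OF bpm disj \<open>p 1 \<in> R \<union> B\<close>] by simp
qed

theorem mainTheorem5: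
  fixes R B :: "real set" and n m :: nat and p :: "nat \<Rightarrow> real"
  assumes "finite R" "finite B" "card R = n" "card B = n" "R \<inter> B = {}"
    and "strict_mono_on {1..2*n} p" "p ` {1..2*n} = R \<union> B"
    and "1 \<le> m" "m \<le> n"
    and "card {i\<in>{1..2*m}. p i \<in> R} = card {i\<in>{1..2*m}. p i \<in> B}"
    and "\<forall>k. 1 \<le> k \<and> k < m \<longrightarrow>
           card {i\<in>{1..2*k}. p i \<in> R} \<noteq> card {i\<in>{1..2*k}. p i \<in> B}"
  shows "((p 1 \<in> R \<and> p (2*m) \<in> B) \<or> (p 1 \<in> B \<and> p (2*m) \<in> R)) \<and>
         (\<forall>M. min_weight_nc_bichromatic_matching R B M \<longrightarrow> {p 1, p (2*m)} \<in> M)"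
proof
  have "p ` {1..2*m} \<subseteq> R \<union> B"
    using assms(7,9) by auto
  then show "(p 1 \<in> R \<and> p (2*m) \<in> B) \<or> (p 1 \<in> B \<and> p (2*m) \<in> R)"
    using first_balanced_prefix_endpoints_differ assms(5,8,10,11) by blast
  show "\<forall>M. min_weight_nc_bichromatic_matching R B M \<longrightarrow> {p 1, p (2*m)} \<in> M"
    using min_weight_matching_contains_first_balanced_edge[OF _ assms(1,2,5,6,7,8)] assms(9-11) by simp
qed

end
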